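(* Let $X$ be a one-sided subshift with $\sigma(X)=X$ which is aperiodic and satisfies $|Sp_l(X,\sigma)|<\infty$. Then $(\widetilde{X},\sigma_{\widetilde{X}})$ is a zero-dimensional compact metrizable system in which $\sigma_{\widetilde{X}}$ is an aperiodic surjective local homeomorphism, and moreover: (i) $|Sp_l(\widetilde{X},\sigma_{\widetilde{X}})|=|Sp_l(X,\sigma)|<\infty$; (ii) every point of $Sp_l(\widetilde{X},\sigma_{\widetilde{X}})$ is an isolated point of $\widetilde{X}$.
   Context: $X\subseteq\mathcal{A}^{\mathbb{N}}$ is a closed shift-invariant set over a finite alphabet $\mathcal{A}$, $\sigma$ the left shift. Aperiodic: no point $x$ with $\sigma^n(x)=x$ for some $n\ge1$. For a map $T$ on $Y$, $Sp_l(Y,T)=\{y: |T^{-1}(\{y\})|\ge2\}$. The cover: for $x\in X$, $l\ge0$, $P_l(x)=\{\mu\in\mathcal{L}(X): |\mu|=l,\ \mu x\in X\}$. Let $\mathcal{I}=\{(k,l)\in\mathbb{N}^2: k\le l\}$ with $(k,l)\preceq(k',l')$ iff $k\le k'$ and $l-k\le l'-k'$. For $(k,l)\in\mathcal{I}$, $x\overset{k,l}{\sim}y$ iff $x_{[0,k)}=y_{[0,k)}$ and $P_l(\sigma^k(x))=P_l(\sigma^k(y))$; ${}_kX_l=X/\overset{k,l}{\sim}$ (finite, discrete), classes ${}_k[x]_l$. $\widetilde{X}$ is the projective limit of $({}_kX_l)$ under the maps ${}_{k'}[x]_{l'}\mapsto{}_k[x]_l$ for $(k,l)\preceq(k',l')$.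 The shift is $\sigma_{\widetilde{X}}(\tilde{x})_{(k,l)}={}_k[\sigma(z)]_l$ for any representative $z$ of $\tilde{x}_{(k+1,l+1)}$. A map is a local homeomorphism if each point has an open neighbourhood on which it restricts to a homeomorphism onto an open set. *)

theory Defs
  imports "HOL-Analysis.Analysis"
begin

definition fullshift_top :: "(nat \<Rightarrow> 'a) topology" where
  "fullshift_top = product_topology (\<lambda>_. discrete_topology UNIV) UNIV"

definition shift :: "(nat \<Rightarrow> 'a) \<Rightarrow> (nat \<Rightarrow> 'a)" where
  "shift x = (\<lambda>i. x (Suc i))"

definition subshift :: "(nat \<Rightarrow> 'a::finite) set \<Rightarrow> bool" where
  "subshift X \<longleftrightarrow> closedin fullshift_top X \<and> shift ` X \<subseteq> X"

definition aperiodic_on :: "'b set \<Rightarrow> ('b \<Rightarrow> 'b) \<Rightarrow> bool" where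
  "aperiodic_on Y T \<longleftrightarrow> (\<forall>y\<in>Y. \<forall>n\<ge>1. (T ^^ n) y \<noteq> y)"

definition Sp_l :: "'b set \<Rightarrow> ('b \<Rightarrow> 'b) \<Rightarrow> 'b set" where
  "Sp_l Y T = {y \<in> Y. \<exists>a\<in>Y. \<exists>b\<in>Y. a \<noteq> b \<and> T a = y \<and> T b = y}"

definition lang :: "(nat \<Rightarrow> 'a) set \<Rightarrow> 'a list set" where
  "lang X = {w. \<exists>x\<in>X. \<exists>n. w = map x [n..<n + length w]}"

definition conc :: "'a list \<Rightarrow> (nat \<Rightarrow> 'a) \<Rightarrow> (nat \<Rightarrow> 'a)" where
  "conc \<mu> x = (\<lambda>i. if i < length \<mu> then \<mu> ! i else x (i - length \<mu>))"

definition P_l :: "(nat \<Rightarrow> 'a) set \<Rightarrow> nat \<Rightarrow> (nat \<Rightarrow> 'a) \<Rightarrow> 'a list set" where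
  "P_l X l x = {\<mu> \<in> lang X. length \<mu> = l \<and> conc \<mu> x \<in> X}"

definition kl_rel :: "(nat \<Rightarrow> 'a) set \<Rightarrow> nat \<Rightarrow> nat \<Rightarrow> (nat \<Rightarrow> 'a) \<Rightarrow> (nat \<Rightarrow> 'a) \<Rightarrow> bool" where
  "kl_rel X k l x y \<longleftrightarrow> (\<forall>i<k. x i = y i) \<and> P_l X l ((shift ^^ k) x) = P_l X l ((shift ^^ k) y)"

definition kcls :: "(nat \<Rightarrow> 'a) set \<Rightarrow> nat \<Rightarrow> nat \<Rightarrow> (nat \<Rightarrow> 'a) \<Rightarrow> (nat \<Rightarrow> 'a) set" where
  "kcls X k l x = {y \<in> X. kl_rel X k l x y}"

definition kXl :: "(nat \<Rightarrow> 'a) set \<Rightarrow> nat \<Rightarrow> nat \<Rightarrow> (nat \<Rightarrow> 'a) set set" where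
  "kXl X k l = kcls X k l ` X"

definition Idx :: "(nat \<times> nat) set" where
  "Idx = {(k, l). k \<le> l}"

definition idx_le :: "nat \<times> nat \<Rightarrow> nat \<times> nat \<Rightarrow> bool" where
  "idx_le p q \<longleftrightarrow> fst p \<le> fst q \<and> snd p - fst p \<le> snd q - fst q"

definition bond :: "(nat \<Rightarrow> 'a) set \<Rightarrow> nat \<times> nat \<Rightarrow> (nat \<Rightarrow> 'a) set \<Rightarrow> (nat \<Rightarrow> 'a) set" where
  "bond X p C = kcls X (fst p) (snd p) (SOME z. z \<in> C)"

definition cover_prod_top :: "(nat \<Rightarrow> 'a) set \<Rightarrow> (nat \<times> nat \<Rightarrow> (nat \<Rightarrow> 'a) set) topology" where
  "cover_prod_top X = product_topology (\<lambda>p. discrete_topology (kXl X (fst p) (snd p))) Idx"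

definition Xtil :: "(nat \<Rightarrow> 'a) set \<Rightarrow> (nat \<times> nat \<Rightarrow> (nat \<Rightarrow> 'a) set) set" where
  "Xtil X = {t \<in> (\<Pi>\<^sub>E p\<in>Idx. kXl X (fst p) (snd p)).
              \<forall>p\<in>Idx. \<forall>q\<in>Idx. idx_le p q \<longrightarrow> t p = bond X p (t q)}"

definition Xtil_top :: "(nat \<Rightarrow> 'a) set \<Rightarrow> (nat \<times> nat \<Rightarrow> (nat \<Rightarrow> 'a) set) topology" where
  "Xtil_top X = subtopology (cover_prod_top X) (Xtil X)"

definition shift_til :: "(nat \<Rightarrow> 'a) set \<Rightarrow> (nat \<times> nat \<Rightarrow> (nat \<Rightarrow> 'a) set) \<Rightarrow> (nat \<times> nat \<Rightarrow> (nat \<Rightarrow> 'a) set)" where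
  "shift_til X t = (\<lambda>p\<in>Idx. kcls X (fst p) (snd p) (shift (SOME z. z \<in> t (Suc (fst p), Suc (snd p)))))"

definition local_homeomorphism :: "'b topology \<Rightarrow> ('b \<Rightarrow> 'b) \<Rightarrow> bool" where
  "local_homeomorphism T f \<longleftrightarrow>
     (\<forall>x\<in>topspace T. \<exists>U. openin T U \<and> x \<in> U \<and> openin T (f ` U) \<and>
        homeomorphic_map (subtopology T U) (subtopology T (f ` U)) f)"

definition isolated_point :: "'b topology \<Rightarrow> 'b \<Rightarrow> bool" where
  "isolated_point T x \<longleftrightarrow> x \<in> topspace T \<and> openin T {x}"

end

theory Submission
  imports Defs
begin

text \<open>
  A thread \<open>s\<close> of the cover is determined by its image under the shift together with its first
  letter. The first letters of the preimages of a thread \<open>t\<close> are exactly the letters \<open>a\<close> that are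
  admissible for \<open>t\<close>, i.e.\ \<open>a z \<in> X\<close> for all \<open>z\<close> in all components \<open>t(k,k+1)\<close>, since such a
  letter can be prepended to \<open>t\<close>. So on the clopen cylinder of threads with first letter \<open>a\<close>
  the shift is injective onto the open set of threads admitting \<open>a\<close>, and by compactness it is a
  local homeomorphism.

  If \<open>t\<close> admits two letters, every point of every component \<open>t(k,k+1)\<close> lies in \<open>Sp\<^sub>l(X,\<sigma>)\<close>.
  This set is finite, hence separated by prefixes of some length \<open>N\<close>, so \<open>t(N,N+1)\<close> is a
  singleton \<open>{x}\<close>. That singleton determines \<open>t\<close> as the image of \<open>x\<close> under the embedding
  \<open>x \<mapsto> (k[x]l)\<close> and makes \<open>t\<close> an isolated point; thus the branch points of the cover are the
  embedded branch points of \<open>X\<close>. Aperiodicity passes to the cover because the diagonal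
  components \<open>t(i+1,i+1)\<close> determine a point of the closed set \<open>X\<close> on which the two shifts agree.
\<close>

section \<open>Words and sequences\<close>

lemma funpow_shift: "(shift ^^ k) x = (\<lambda>i. x (i + k))"
proof (induction k arbitrary: x)
  case 0 then show ?case by simp
next
  case (Suc k)
  have "(shift ^^ Suc k) x = (shift ^^ k) (shift x)" by (simp only: funpow_Suc_right comp_def)
  also have "\<dots> = (\<lambda>i. shift x (i + k))" by (rule Suc.IH)
  also have "\<dots> = (\<lambda>i. x (i + Suc k))" by (simp add: shift_def)
  finally show ?case .
qed

lemma conc_singleton_0 [simp]: "conc [a] x 0 = a"
  and conc_singleton_Suc [simp]: "conc [a] x (Suc i) = x i"
  by (simp_all add: conc_def)

lemma shift_conc_singleton [simp]: "shift (conc [a] x) = x"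
  by (simp add: shift_def conc_def)

lemma conc_head_shift: "conc [x 0] (shift x) = x"
  by (auto simp: shift_def conc_def fun_eq_iff)

lemma conc_append: "conc (\<mu> @ \<nu>) x = conc \<mu> (conc \<nu> x)"
  by (auto simp: conc_def fun_eq_iff nth_append)

lemma funpow_shift_conc: "length \<mu> = n \<Longrightarrow> (shift ^^ n) (conc \<mu> x) = x"
  by (auto simp: funpow_shift conc_def fun_eq_iff)

lemma conc_prefix_funpow_shift: "conc (map x [0..<n]) ((shift ^^ n) x) = x"
  by (auto simp: funpow_shift conc_def fun_eq_iff)

lemma conc_snoc_funpow_shift: "conc (\<mu> @ [x k]) ((shift ^^ Suc k) x) = conc \<mu> ((shift ^^ k) x)"
proof -
  have "conc [x k] ((shift ^^ Suc k) x) = (shift ^^ k) x"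
    by (auto simp del: funpow.simps simp add: funpow_shift conc_def fun_eq_iff)
  then show ?thesis by (simp add: conc_append)
qed

lemma lang_if_conc_mem: "conc \<mu> x \<in> X \<Longrightarrow> \<mu> \<in> lang X"
  unfolding lang_def
  by (rule CollectI, rule bexI[of _ "conc \<mu> x"], rule exI[of _ 0])
    (auto simp: conc_def intro: nth_equalityI)

lemma P_l_iff: "\<mu> \<in> P_l X l x \<longleftrightarrow> length \<mu> = l \<and> conc \<mu> x \<in> X"
  by (auto simp: P_l_def lang_if_conc_mem)

lemma finite_set_separated_by_prefix:
  fixes S :: "(nat \<Rightarrow> 'b) set"
  assumes "finite S"
  obtains N where "\<And>x y. x \<in> S \<Longrightarrow> y \<in> S \<Longrightarrow> (\<forall>i<N. x i = y i) \<Longrightarrow> x = y"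
proof -
  define D where "D = {(x, y). x \<in> S \<and> y \<in> S \<and> x \<noteq> y}"
  define f where "f = (\<lambda>(x, y). SOME i. (x :: nat \<Rightarrow> 'b) i \<noteq> y i)"
  have fD: "finite (f ` D)"
    unfolding D_def using assms by (auto intro: finite_subset[of _ "S \<times> S"])
  define N where "N = Suc (Max (insert 0 (f ` D)))"
  have "x = y" if "x \<in> S" "y \<in> S" "\<forall>i<N. x i = y i" for x y
  proof (rule ccontr)
    assume ne: "x \<noteq> y"
    then have d: "(x, y) \<in> D" using that by (simp add: D_def)
    have "\<exists>i. x i \<noteq> y i" using ne by auto
    then have "x (SOME i. x i \<noteq> y i) \<noteq> y (SOME i. x i \<noteq> y i)" by (rule someI_ex)
    then have "x (f (x, y)) \<noteq> y (f (x, y))" unfolding f_def by simp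
    moreover have "f (x, y) < N" unfolding N_def using d fD by (simp add: le_imp_less_Suc)
    ultimately show False using that(3) by blast
  qed
  then show ?thesis by (rule that)
qed

lemma closedin_fullshift_mem_if_prefixes:
  assumes "closedin fullshift_top X" and prefixes: "\<And>n. \<exists>x\<in>X. \<forall>i<n. x i = y i"
  shows "y \<in> X"
proof (rule ccontr)
  assume "y \<notin> X"
  moreover have "openin fullshift_top (UNIV - X)"
    using assms(1) by (simp add: closedin_def fullshift_top_def)
  ultimately obtain U where U: "finite {i. U i \<noteq> UNIV}" "y \<in> Pi\<^sub>E UNIV U" "Pi\<^sub>E UNIV U \<subseteq> UNIV - X"
    unfolding fullshift_top_def openin_product_topology_alt by fastforce
  define N where "N = Suc (Max (insert 0 {i. U i \<noteq> UNIV}))"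
  obtain x where x: "x \<in> X" "\<forall>i<N. x i = y i" using prefixes by blast
  have "x i \<in> U i" for i
  proof (cases "U i = UNIV")
    case False
    then have "i < N" unfolding N_def using U(1) by (simp add: le_imp_less_Suc)
    then show ?thesis using x(2) U(2) by auto
  qed simp
  then show False using U(3) x(1) by blast
qed

lemma finite_decreasing_Inter_attained:
  fixes A :: "nat \<Rightarrow> 'a::finite set"
  assumes "\<And>k. A (Suc k) \<subseteq> A k"
  obtains K where "(\<Inter>k. A k) = A K"
proof -
  define f where "f a = (SOME k. a \<notin> A k)" for a
  define K where "K = Max (range f)"
  have "a \<notin> A K" if "a \<notin> (\<Inter>k. A k)" for a
  proof -
    have "\<exists>k. a \<notin> A k" using that by blast
    then have "a \<notin> A (f a)" unfolding f_def by (rule someI_ex)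
    moreover have "A K \<subseteq> A (f a)"
      using lift_Suc_antimono_le[of A, OF assms] by (simp add: K_def)
    ultimately show ?thesis by blast
  qed
  then have "(\<Inter>k. A k) = A K" by blast
  then show ?thesis by (rule that)
qed

section \<open>General topology\<close>

lemma product_discrete_dim_le_0: "product_topology (\<lambda>i. discrete_topology (S i)) I dim_le 0"
  unfolding dimension_le_0_neighbourhood_base_of_clopen neighbourhood_base_of
proof (intro allI impI)
  let ?T = "product_topology (\<lambda>i. discrete_topology (S i)) I"
  fix W x assume "openin ?T W \<and> x \<in> W"
  then obtain U where U: "finite {i \<in> I. U i \<noteq> topspace (discrete_topology (S i))}"
    "\<forall>i\<in>I. openin (discrete_topology (S i)) (U i)" "x \<in> Pi\<^sub>E I U" "Pi\<^sub>E I U \<subseteq> W"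
    unfolding openin_product_topology_alt by blast
  have "openin ?T (Pi\<^sub>E I U)"
    unfolding openin_product_topology_alt using U(1,2) by blast
  moreover have "closedin ?T (Pi\<^sub>E I U)"
    unfolding closedin_product_topology using U(2) by simp
  ultimately show "\<exists>U V. openin ?T U \<and> (closedin ?T V \<and> openin ?T V) \<and> x \<in> U \<and> U \<subseteq> V \<and> V \<subseteq> W"
    using U(3,4) by blast
qed

lemma local_homeomorphism_compactI:
  assumes compact: "compact_space T" and Hausdorff: "Hausdorff_space T"
    and cont: "continuous_map T T f"
    and clopen_nbhd: "\<And>x. x \<in> topspace T \<Longrightarrow>
      \<exists>U. openin T U \<and> closedin T U \<and> x \<in> U \<and> inj_on f U \<and> openin T (f ` U)"
  shows "local_homeomorphism T f"
  unfolding local_homeomorphism_def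
proof
  fix x assume "x \<in> topspace T"
  then obtain U where U: "openin T U" "closedin T U" "x \<in> U" "inj_on f U" "openin T (f ` U)"
    using clopen_nbhd by blast
  have top_U: "topspace (subtopology T U) = U"
    and top_fU: "topspace (subtopology T (f ` U)) = f ` U"
    using openin_subset[OF U(1)] openin_subset[OF U(5)] by auto
  have cont_U: "continuous_map (subtopology T U) (subtopology T (f ` U)) f"
    by (simp add: continuous_map_in_subtopology continuous_map_from_subtopology cont top_U)
  have "compact_space (subtopology T U)"
    using closedin_compact_space[OF compact U(2)] compact_space_subtopology by blast
  moreover have "Hausdorff_space (subtopology T (f ` U))"
    using Hausdorff Hausdorff_space_subtopology by blast
  ultimately have "closed_map (subtopology T U) (subtopology T (f ` U)) f"
    using continuous_imp_closed_map[OF cont_U] by blast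
  then have "homeomorphic_map (subtopology T U) (subtopology T (f ` U)) f"
    using bijective_closed_imp_homeomorphic_map[OF cont_U] top_U top_fU U(4) by simp
  then show "\<exists>U. openin T U \<and> x \<in> U \<and> openin T (f ` U) \<and>
      homeomorphic_map (subtopology T U) (subtopology T (f ` U)) f"
    using U by blast
qed

section \<open>The relations \<open>\<^sub>k\<sim>\<^sub>l\<close> and the threads of the cover\<close>

lemma Idx_iff [simp]: "(k, l) \<in> Idx \<longleftrightarrow> k \<le> l"
  by (simp add: Idx_def)

lemma idx_le_iff [simp]: "idx_le (k, l) (k', l') \<longleftrightarrow> k \<le> k' \<and> l - k \<le> l' - k'"
  by (simp add: idx_le_def)

lemma kl_rel_refl: "kl_rel X k l x x"
  and kl_rel_sym: "kl_rel X k l x y \<Longrightarrow> kl_rel X k l y x"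
  and kl_rel_trans: "kl_rel X k l x y \<Longrightarrow> kl_rel X k l y z \<Longrightarrow> kl_rel X k l x z"
  by (simp_all add: kl_rel_def)

lemma in_kcls: "y \<in> kcls X k l x \<longleftrightarrow> y \<in> X \<and> kl_rel X k l x y"
  by (simp add: kcls_def)

lemma kcls_self: "x \<in> X \<Longrightarrow> x \<in> kcls X k l x"
  by (simp add: in_kcls kl_rel_refl)

lemma kcls_eq_if_mem: "y \<in> kcls X k l x \<Longrightarrow> kcls X k l y = kcls X k l x"
  by (auto simp: in_kcls; meson kl_rel_sym kl_rel_trans)

lemma kcls_eqI: "kl_rel X k l x y \<Longrightarrow> kcls X k l x = kcls X k l y"
  by (auto simp: in_kcls; meson kl_rel_sym kl_rel_trans)

lemma finite_kXl:
  fixes X :: "(nat \<Rightarrow> 'a::finite) set"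
  shows "finite (kXl X k l)"
proof -
  define F where "F = (\<lambda>(w, P). {y \<in> X. map y [0..<k] = w \<and> P_l X l ((shift ^^ k) y) = P})"
  define Words where "Words n = {w. set w \<subseteq> (UNIV :: 'a set) \<and> length w = n}" for n
  have "kcls X k l x = F (map x [0..<k], P_l X l ((shift ^^ k) x))" for x
    unfolding F_def kcls_def kl_rel_def by (auto simp: map_eq_conv)
  moreover have "P_l X l z \<subseteq> Words l" for z
    by (auto simp: P_l_iff Words_def)
  ultimately have "kXl X k l \<subseteq> F ` (Words k \<times> Pow (Words l))"
    unfolding kXl_def by (auto simp: Words_def)
  moreover have "finite (Words k \<times> Pow (Words l))"
    unfolding Words_def by (intro finite_cartesian_product finite_lists_length_eq finite_Pow_iff[THEN iffD2]) simp_all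
  ultimately show ?thesis by (meson finite_imageI finite_subset)
qed

lemma Xtil_PiE: "t \<in> Xtil X \<Longrightarrow> t \<in> (\<Pi>\<^sub>E p\<in>Idx. kXl X (fst p) (snd p))"
  by (simp add: Xtil_def)

lemma Xtil_component_in_kXl:
  assumes "t \<in> Xtil X" "k \<le> l"
  shows "t (k, l) \<in> kXl X k l"
proof -
  have "(k, l) \<in> Idx" using assms(2) by simp
  from PiE_mem[OF Xtil_PiE[OF assms(1)] this] show ?thesis by simp
qed

lemma Xtil_component_nonempty:
  assumes "t \<in> Xtil X" "k \<le> l"
  shows "\<exists>z. z \<in> t (k, l)"
proof -
  obtain x where "x \<in> X" "t (k, l) = kcls X k l x"
    using Xtil_component_in_kXl[OF assms] by (auto simp: kXl_def)
  then show ?thesis using kcls_self by metis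
qed

lemma Xtil_component_eq_kcls:
  assumes "t \<in> Xtil X" "k \<le> l" "z \<in> t (k, l)"
  shows "z \<in> X" "t (k, l) = kcls X k l z"
proof -
  obtain z0 where "t (k, l) = kcls X k l z0"
    using Xtil_component_in_kXl[OF assms(1,2)] by (auto simp: kXl_def)
  then show "z \<in> X" "t (k, l) = kcls X k l z"
    using assms(3) kcls_eq_if_mem[of z X k l z0] by (auto simp: in_kcls)
qed

lemma Xtil_eqI:
  assumes "t \<in> Xtil X" "t' \<in> Xtil X" and "\<And>k l. k \<le> l \<Longrightarrow> t (k, l) = t' (k, l)"
  shows "t = t'"
proof (rule extensionalityI)
  show "t \<in> extensional Idx" "t' \<in> extensional Idx"
    using Xtil_PiE[OF assms(1)] Xtil_PiE[OF assms(2)] by (simp_all add: PiE_iff)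
  show "t p = t' p" if "p \<in> Idx" for p
    using that assms(3) by (cases p) simp
qed

lemma funpow_shift_Suc: "(shift ^^ k) (shift z) = (shift ^^ Suc k) z"
  by (simp only: funpow_Suc_right comp_def)

lemma kl_rel_cons:
  assumes "kl_rel X k (Suc l) x y"
  shows "kl_rel X (Suc k) (Suc l) (conc [a] x) (conc [a] y)"
proof -
  have "(shift ^^ Suc k) (conc [a] z) = (shift ^^ k) z" for z :: "nat \<Rightarrow> 'a"
    by (simp only: funpow_shift_Suc[symmetric] shift_conc_singleton)
  moreover have "\<forall>i<Suc k. conc [a] x i = conc [a] y i"
    using assms by (auto simp: kl_rel_def less_Suc_eq_0_disj)
  ultimately show ?thesis using assms by (simp add: kl_rel_def del: funpow.simps)
qed

text \<open>The hypothesis \<open>\<sigma>(X) = X\<close> is what makes \<open>P_l\<close> determine \<open>P_l'\<close> for \<open>l' \<le> l\<close>.\<close>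

type_synonym 'a thread = "nat \<times> nat \<Rightarrow> (nat \<Rightarrow> 'a) set"

locale onto_subshift =
  fixes X :: "(nat \<Rightarrow> 'a::finite) set"
  assumes closed: "closedin fullshift_top X" and shift_image: "shift ` X = X"
begin

lemma shift_mem: "x \<in> X \<Longrightarrow> shift x \<in> X"
  using shift_image by auto

lemma funpow_shift_mem: "x \<in> X \<Longrightarrow> (shift ^^ n) x \<in> X"
  by (induction n) (auto simp: shift_mem)

lemma funpow_shift_image: "(shift ^^ n) ` X = X"
proof (induction n)
  case 0 then show ?case by simp
next
  case (Suc n)
  have "(shift ^^ Suc n) ` X = (shift ^^ n) ` (shift ` X)"
    by (simp only: funpow_Suc_right image_comp)
  then show ?case using Suc shift_image by simp
qed

lemma conc_mem_iff_extendable: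
  "conc \<mu> x \<in> X \<longleftrightarrow> (\<exists>\<nu>. length \<nu> = n \<and> conc (\<nu> @ \<mu>) x \<in> X)"
proof
  assume "conc \<mu> x \<in> X"
  then obtain w where w: "w \<in> X" "(shift ^^ n) w = conc \<mu> x"
    using funpow_shift_image[of n] by (metis imageE)
  have "conc (map w [0..<n] @ \<mu>) x = w"
    using w(2) conc_prefix_funpow_shift[of w n] by (simp add: conc_append)
  then show "\<exists>\<nu>. length \<nu> = n \<and> conc (\<nu> @ \<mu>) x \<in> X"
    using w(1) by (intro exI[of _ "map w [0..<n]"]) simp
next
  assume "\<exists>\<nu>. length \<nu> = n \<and> conc (\<nu> @ \<mu>) x \<in> X"
  then show "conc \<mu> x \<in> X"
    by (metis conc_append funpow_shift_conc funpow_shift_mem)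
qed

lemma P_l_eq_mono:
  assumes "P_l X l x = P_l X l y" "l' \<le> l"
  shows "P_l X l' x = P_l X l' y"
proof -
  have *: "\<mu> \<in> P_l X l' z \<longleftrightarrow> length \<mu> = l' \<and> (\<exists>\<nu>. length \<nu> = l - l' \<and> \<nu> @ \<mu> \<in> P_l X l z)"
    for \<mu> z
    unfolding P_l_iff conc_mem_iff_extendable[of \<mu> z "l - l'"] using assms(2) by auto
  show ?thesis
    by (rule set_eqI) (simp only: * assms(1))
qed

lemma kl_rel_Suc_Suc_imp:
  assumes "kl_rel X (Suc k) (Suc l) x y"
  shows "kl_rel X k l x y"
proof -
  have *: "\<mu> \<in> P_l X l ((shift ^^ k) z) \<longleftrightarrow> \<mu> @ [z k] \<in> P_l X (Suc l) ((shift ^^ Suc k) z)"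
    for \<mu> z
    by (simp add: P_l_iff conc_snoc_funpow_shift del: funpow.simps)
  have xy: "x k = y k" "\<forall>i<k. x i = y i"
    and P: "P_l X (Suc l) ((shift ^^ Suc k) x) = P_l X (Suc l) ((shift ^^ Suc k) y)"
    using assms by (auto simp: kl_rel_def)
  have "P_l X l ((shift ^^ k) x) = P_l X l ((shift ^^ k) y)"
    by (rule set_eqI) (simp only: * xy(1) P)
  then show ?thesis using xy by (simp add: kl_rel_def)
qed

lemma kl_rel_mono:
  assumes "k \<le> k'" "l - k \<le> l' - k'" "k \<le> l" "k' \<le> l'" "kl_rel X k' l' x y"
  shows "kl_rel X k l x y"
proof -
  have down: "kl_rel X (k + d) (l + d) x y \<Longrightarrow> kl_rel X k l x y" for d
  proof (induction d)
    case (Suc d)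
    then have "kl_rel X (Suc (k + d)) (Suc (l + d)) x y" by simp
    then show ?case by (rule Suc.IH[OF kl_rel_Suc_Suc_imp])
  qed simp
  have "P_l X l' ((shift ^^ k') x) = P_l X l' ((shift ^^ k') y)"
    using assms(5) by (simp add: kl_rel_def)
  moreover have "l + (k' - k) \<le> l'" using assms(1-4) by linarith
  ultimately have "P_l X (l + (k' - k)) ((shift ^^ k') x) = P_l X (l + (k' - k)) ((shift ^^ k') y)"
    by (rule P_l_eq_mono)
  with assms(5) have "kl_rel X (k + (k' - k)) (l + (k' - k)) x y"
    using assms(1) by (simp add: kl_rel_def)
  then show ?thesis by (rule down)
qed

lemma kl_rel_shift:
  assumes "kl_rel X (Suc k) (Suc l) x y"
  shows "kl_rel X k l (shift x) (shift y)"
proof -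
  have P: "P_l X (Suc l) ((shift ^^ Suc k) x) = P_l X (Suc l) ((shift ^^ Suc k) y)"
    and prefix: "\<forall>i<Suc k. x i = y i"
    using assms by (simp_all add: kl_rel_def)
  have "P_l X l ((shift ^^ k) (shift x)) = P_l X l ((shift ^^ k) (shift y))"
    unfolding funpow_shift_Suc using P by (rule P_l_eq_mono) simp
  moreover have "\<forall>i<k. shift x i = shift y i"
    using prefix by (simp add: shift_def)
  ultimately show ?thesis by (simp add: kl_rel_def)
qed

lemma conc_singleton_mem_if_kl_rel:
  assumes "kl_rel X k l x y" "k < l" "conc [a] x \<in> X"
  shows "conc [a] y \<in> X"
proof -
  have split: "conc [a] z = conc (a # map z [0..<k]) ((shift ^^ k) z)" for z :: "nat \<Rightarrow> 'a"
    using conc_append[of "[a]" "map z [0..<k]" "(shift ^^ k) z"]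
    by (simp add: conc_prefix_funpow_shift)
  have "P_l X l ((shift ^^ k) x) = P_l X l ((shift ^^ k) y)"
    using assms(1) by (simp add: kl_rel_def)
  then have P: "P_l X (Suc k) ((shift ^^ k) x) = P_l X (Suc k) ((shift ^^ k) y)"
    by (rule P_l_eq_mono) (use assms(2) in simp)
  have prefix: "map x [0..<k] = map y [0..<k]"
    using assms(1) by (auto simp: kl_rel_def)
  have "a # map x [0..<k] \<in> P_l X (Suc k) ((shift ^^ k) x)"
    using assms(3) by (simp add: P_l_iff split[of x])
  then have "a # map y [0..<k] \<in> P_l X (Suc k) ((shift ^^ k) y)"
    by (simp only: prefix P)
  then show ?thesis by (simp add: P_l_iff split[of y])
qed

lemma bond_kcls:
  assumes "x \<in> X" "k \<le> k'" "l - k \<le> l' - k'" "k \<le> l" "k' \<le> l'"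
  shows "bond X (k, l) (kcls X k' l' x) = kcls X k l x"
proof -
  define z where "z = (SOME z. z \<in> kcls X k' l' x)"
  have "z \<in> kcls X k' l' x" unfolding z_def some_in_eq using kcls_self[OF assms(1)] by blast
  then have "kl_rel X k l x z" using kl_rel_mono[OF assms(2-5)] by (simp add: in_kcls)
  then show ?thesis unfolding bond_def z_def by (simp add: kcls_eqI)
qed

lemma Xtil_memI:
  assumes "t \<in> extensional Idx"
    and "\<And>k l. k \<le> l \<Longrightarrow> \<exists>z\<in>X. \<forall>k' l'. k' \<le> k \<longrightarrow> l' - k' \<le> l - k \<longrightarrow> k' \<le> l' \<longrightarrow>
      t (k', l') = kcls X k' l' z"
  shows "t \<in> Xtil X"
proof -
  have "t (k, l) \<in> kXl X k l" if kl: "k \<le> l" for k l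
  proof -
    obtain z where "z \<in> X" "t (k, l) = kcls X k l z" using assms(2)[OF kl] kl by blast
    then show ?thesis by (auto simp: kXl_def)
  qed
  then have "t \<in> (\<Pi>\<^sub>E p\<in>Idx. kXl X (fst p) (snd p))"
    using assms(1) by (auto simp: PiE_iff Idx_def)
  moreover have "t (k', l') = bond X (k', l') (t (k, l))"
    if "k' \<le> k" "l' - k' \<le> l - k" "k' \<le> l'" "k \<le> l" for k l k' l'
    using assms(2)[OF that(4)] that bond_kcls by fastforce
  ultimately show ?thesis unfolding Xtil_def by auto
qed

lemma Xtil_component_mono:
  assumes "t \<in> Xtil X" "k \<le> k'" "l - k \<le> l' - k'" "k \<le> l" "k' \<le> l'" "z \<in> t (k', l')"
  shows "t (k, l) = kcls X k l z" "z \<in> t (k, l)"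
proof -
  have "t (k, l) = bond X (k, l) (t (k', l'))"
    using assms(1-5) by (simp add: Xtil_def)
  also have "\<dots> = kcls X k l z"
    using Xtil_component_eq_kcls[OF assms(1,5,6)] bond_kcls assms(2-5) by simp
  finally show "t (k, l) = kcls X k l z" .
  then show "z \<in> t (k, l)"
    using Xtil_component_eq_kcls[OF assms(1,5,6)] kcls_self by simp
qed

section \<open>The shift on the cover and the embedding of \<open>X\<close>\<close>

lemma shift_til_component:
  assumes "t \<in> Xtil X" "k \<le> l" "z \<in> t (Suc k, Suc l)"
  shows "shift_til X t (k, l) = kcls X k l (shift z)"
proof -
  define z' where "z' = (SOME z. z \<in> t (Suc k, Suc l))"
  have "z' \<in> t (Suc k, Suc l)" unfolding z'_def some_in_eq using assms(3) by blast
  then have "kl_rel X (Suc k) (Suc l) z' z"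
    using Xtil_component_eq_kcls[OF assms(1) _ assms(3)] assms(2) by (simp add: in_kcls kl_rel_sym)
  then have "kcls X k l (shift z') = kcls X k l (shift z)" by (intro kcls_eqI kl_rel_shift)
  then show ?thesis using assms(2) unfolding shift_til_def z'_def by simp
qed

lemma shift_til_mem:
  assumes t: "t \<in> Xtil X"
  shows "shift_til X t \<in> Xtil X"
proof (rule Xtil_memI)
  show "shift_til X t \<in> extensional Idx" by (simp add: shift_til_def)
  fix k l :: nat assume "k \<le> l"
  then obtain z where z: "z \<in> t (Suc k, Suc l)"
    using Xtil_component_nonempty[OF t, of "Suc k" "Suc l"] by auto
  then have "shift z \<in> X"
    using Xtil_component_eq_kcls(1)[OF t _ z] \<open>k \<le> l\<close> shift_mem by simp
  moreover have "shift_til X t (k', l') = kcls X k' l' (shift z)"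
    if "k' \<le> k" "l' - k' \<le> l - k" "k' \<le> l'" for k' l'
    using shift_til_component[OF t that(3)] Xtil_component_mono(2)[OF t _ _ _ _ z] that \<open>k \<le> l\<close>
    by simp
  ultimately show "\<exists>z\<in>X. \<forall>k' l'. k' \<le> k \<longrightarrow> l' - k' \<le> l - k \<longrightarrow> k' \<le> l' \<longrightarrow>
      shift_til X t (k', l') = kcls X k' l' z"
    by blast
qed

definition embed :: "(nat \<Rightarrow> 'a) \<Rightarrow> 'a thread" where
  "embed x = (\<lambda>p\<in>Idx. kcls X (fst p) (snd p) x)"

lemma embed_mem: "x \<in> X \<Longrightarrow> embed x \<in> Xtil X"
  by (rule Xtil_memI) (auto simp: embed_def)

lemma inj_on_embed: "inj_on embed X"
proof (rule inj_onI, rule ext)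
  fix x y i assume "x \<in> X" "y \<in> X" and eq: "embed x = embed y"
  have "kcls X (Suc i) (Suc i) x = kcls X (Suc i) (Suc i) y"
    using fun_cong[OF eq, of "(Suc i, Suc i)"] by (simp add: embed_def)
  then have "y \<in> kcls X (Suc i) (Suc i) x" using kcls_self[OF \<open>y \<in> X\<close>] by simp
  then show "x i = y i" by (simp add: in_kcls kl_rel_def)
qed

lemma shift_til_embed:
  assumes "x \<in> X"
  shows "shift_til X (embed x) = embed (shift x)"
proof (rule Xtil_eqI)
  show "shift_til X (embed x) \<in> Xtil X" "embed (shift x) \<in> Xtil X"
    using assms by (simp_all add: shift_til_mem embed_mem shift_mem)
  fix k l :: nat assume "k \<le> l"
  moreover have "x \<in> embed x (Suc k, Suc l)"
    using \<open>k \<le> l\<close> kcls_self[OF assms] by (simp add: embed_def)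
  ultimately show "shift_til X (embed x) (k, l) = embed (shift x) (k, l)"
    using shift_til_component[OF embed_mem[OF assms]] by (simp add: embed_def)
qed

text \<open>A singleton component \<open>t(N,N+1)\<close> determines every component, since every index lies
  below some \<open>(k + N, l + N + 1)\<close>, which in turn lies above \<open>(N, N + 1)\<close>.\<close>

lemma Xtil_eq_embed_if_singleton:
  assumes t: "t \<in> Xtil X" and single: "t (N, Suc N) = {x}"
  shows "t = embed x"
proof (rule Xtil_eqI[OF t])
  have "x \<in> X" using Xtil_component_eq_kcls(1)[OF t, of N "Suc N"] single by simp
  then show "embed x \<in> Xtil X" by (rule embed_mem)
  fix k l :: nat assume "k \<le> l"
  then obtain z where z: "z \<in> t (k + N, l + N + 1)"
    using Xtil_component_nonempty[OF t, of "k + N" "l + N + 1"] by auto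
  then have "z \<in> t (N, Suc N)"
    using Xtil_component_mono(2)[OF t _ _ _ _ z] \<open>k \<le> l\<close> by simp
  then have "z = x" using single by simp
  then show "t (k, l) = embed x (k, l)"
    using Xtil_component_mono(1)[OF t _ _ _ _ z] \<open>k \<le> l\<close> by (simp add: embed_def)
qed

section \<open>Preimages under the shift of the cover\<close>

definition first_letter :: "'a thread \<Rightarrow> 'a" where
  "first_letter t = (SOME w. w \<in> t (1, 1)) 0"

lemma first_letter_eq:
  assumes s: "s \<in> Xtil X" and "Suc k \<le> l" "w \<in> s (Suc k, l)"
  shows "w 0 = first_letter s"
proof -
  have w: "w \<in> s (1, 1)" using Xtil_component_mono(2)[OF s _ _ _ _ assms(3)] assms(2) by simp
  define w' where "w' = (SOME w. w \<in> s (1, 1))"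
  have "w' \<in> s (1, 1)" unfolding w'_def some_in_eq using w by blast
  then have "kl_rel X 1 1 w w'" using Xtil_component_eq_kcls[OF s _ w] by (simp add: in_kcls)
  then show ?thesis unfolding first_letter_def w'_def by (simp add: kl_rel_def)
qed

definition ext_letters :: "'a thread \<Rightarrow> nat \<Rightarrow> 'a set" where
  "ext_letters t k = {a. \<forall>z\<in>t (k, Suc k). conc [a] z \<in> X}"

definition admissible_letters :: "'a thread \<Rightarrow> 'a set" where
  "admissible_letters t = (\<Inter>k. ext_letters t k)"

lemma ext_letters_iff:
  assumes t: "t \<in> Xtil X" and z: "z \<in> t (k, Suc k)"
  shows "a \<in> ext_letters t k \<longleftrightarrow> conc [a] z \<in> X"
proof -
  have "kl_rel X k (Suc k) z z'" "kl_rel X k (Suc k) z' z" if "z' \<in> t (k, Suc k)" for z'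
    using that Xtil_component_eq_kcls[OF t _ z] by (auto simp: in_kcls dest: kl_rel_sym)
  then show ?thesis using z conc_singleton_mem_if_kl_rel unfolding ext_letters_def by blast
qed

lemma ext_letters_nonempty:
  assumes t: "t \<in> Xtil X"
  shows "ext_letters t k \<noteq> {}"
proof -
  obtain z where z: "z \<in> t (k, Suc k)" using Xtil_component_nonempty[OF t, of k "Suc k"] by auto
  then have "z \<in> X" using Xtil_component_eq_kcls(1)[OF t _ z] by simp
  then obtain w where "w \<in> X" "z = shift w" using shift_image by blast
  then have "w 0 \<in> ext_letters t k" using ext_letters_iff[OF t z] conc_head_shift by metis
  then show ?thesis by blast
qed

lemma ext_letters_Suc_subset:
  assumes t: "t \<in> Xtil X"
  shows "ext_letters t (Suc k) \<subseteq> ext_letters t k"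
proof -
  obtain z where z: "z \<in> t (Suc k, Suc (Suc k))"
    using Xtil_component_nonempty[OF t, of "Suc k" "Suc (Suc k)"] by auto
  moreover have "z \<in> t (k, Suc k)" using Xtil_component_mono(2)[OF t _ _ _ _ z] by simp
  ultimately show ?thesis using ext_letters_iff[OF t] by blast
qed

lemma admissible_letters_attained:
  assumes "t \<in> Xtil X"
  obtains K where "admissible_letters t = ext_letters t K"
  using finite_decreasing_Inter_attained[of "ext_letters t"] ext_letters_Suc_subset[OF assms]
  unfolding admissible_letters_def by blast

lemma admissible_letters_nonempty:
  assumes "t \<in> Xtil X"
  shows "admissible_letters t \<noteq> {}"
  using admissible_letters_attained[OF assms] ext_letters_nonempty[OF assms] by metis

lemma first_letter_admissible:
  assumes s: "s \<in> Xtil X"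
  shows "first_letter s \<in> admissible_letters (shift_til X s)"
  unfolding admissible_letters_def
proof
  fix k
  obtain w where w: "w \<in> s (Suc k, Suc (Suc k))"
    using Xtil_component_nonempty[OF s, of "Suc k" "Suc (Suc k)"] by auto
  then have "w \<in> X" using Xtil_component_eq_kcls(1)[OF s _ w] by simp
  then have sw: "shift w \<in> shift_til X s (k, Suc k)"
    using shift_til_component[OF s _ w] kcls_self[OF shift_mem[OF \<open>w \<in> X\<close>]] by simp
  have "conc [first_letter s] (shift w) \<in> X"
    using first_letter_eq[OF s _ w] conc_head_shift[of w] \<open>w \<in> X\<close> by simp
  then show "first_letter s \<in> ext_letters (shift_til X s) k"
    using ext_letters_iff[OF shift_til_mem[OF s] sw] by simp
qed

lemma shift_til_preimage_eqI:
  assumes s: "s \<in> Xtil X" and s': "s' \<in> Xtil X"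
    and eq: "shift_til X s = shift_til X s'" and letter: "first_letter s = first_letter s'"
  shows "s = s'"
proof (rule Xtil_eqI[OF s s'])
  fix k l :: nat assume kl: "k \<le> l"
  obtain w where w: "w \<in> s (Suc k, Suc (Suc l))"
    using Xtil_component_nonempty[OF s, of "Suc k" "Suc (Suc l)"] kl by auto
  obtain w' where w': "w' \<in> s' (Suc k, Suc (Suc l))"
    using Xtil_component_nonempty[OF s', of "Suc k" "Suc (Suc l)"] kl by auto
  have "w \<in> X" using Xtil_component_eq_kcls(1)[OF s _ w] kl by simp
  have "kcls X k (Suc l) (shift w) = kcls X k (Suc l) (shift w')"
    using shift_til_component[OF s _ w] shift_til_component[OF s' _ w'] eq kl by simp
  then have "shift w \<in> kcls X k (Suc l) (shift w')"
    using kcls_self shift_mem \<open>w \<in> X\<close> by metis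
  then have shifted: "kl_rel X k (Suc l) (shift w') (shift w)" by (simp add: in_kcls)
  have "w 0 = w' 0" using first_letter_eq[OF s _ w] first_letter_eq[OF s' _ w'] letter kl by simp
  then have "kl_rel X (Suc k) (Suc l) w' w"
    using kl_rel_cons[OF shifted, of "w 0"] conc_head_shift by metis
  then have "kcls X k l w' = kcls X k l w" by (rule kcls_eqI[OF kl_rel_Suc_Suc_imp])
  then show "s (k, l) = s' (k, l)"
    using Xtil_component_mono(1)[OF s _ _ _ _ w] Xtil_component_mono(1)[OF s' _ _ _ _ w'] kl by simp
qed

text \<open>The \<open>(k,l)\<close>-component of \<open>prepend a t\<close> is the class of \<open>a z\<close> for \<open>z \<in> t(k-1,l+1)\<close>; for
  \<open>k = 0\<close> the truncated index \<open>0 - 1 = 0\<close> is still fine, as \<open>(0,l) \<preceq> (1,l+1)\<close>.\<close>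

definition prepend :: "'a \<Rightarrow> 'a thread \<Rightarrow> 'a thread" where
  "prepend a t = (\<lambda>p\<in>Idx. kcls X (fst p) (snd p) (conc [a] (SOME z. z \<in> t (fst p - 1, Suc (snd p)))))"

lemma prepend_component:
  assumes t: "t \<in> Xtil X" and a: "a \<in> admissible_letters t"
    and kl: "k \<le> l" and z: "z \<in> t (k - 1, Suc l)"
  shows "prepend a t (k, l) = kcls X k l (conc [a] z)" "conc [a] z \<in> X"
proof -
  have "z \<in> t (k - 1, Suc (k - 1))" using Xtil_component_mono(2)[OF t _ _ _ _ z] kl by simp
  then show "conc [a] z \<in> X"
    using ext_letters_iff[OF t] a unfolding admissible_letters_def by blast
  define z' where "z' = (SOME z. z \<in> t (k - 1, Suc l))"
  have z': "z' \<in> t (k - 1, Suc l)" unfolding z'_def some_in_eq using z by blast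
  then have "kl_rel X (k - 1) (Suc l) z' z"
    using Xtil_component_eq_kcls(2)[OF t _ z'] z kl by (simp add: in_kcls)
  then have "kl_rel X (Suc (k - 1)) (Suc l) (conc [a] z') (conc [a] z)" by (rule kl_rel_cons)
  then have "kl_rel X k l (conc [a] z') (conc [a] z)"
    by (rule kl_rel_mono[rotated 4]) (use kl in arith)+
  then show "prepend a t (k, l) = kcls X k l (conc [a] z)"
    using kl kcls_eqI unfolding prepend_def z'_def by simp
qed

lemma prepend_mem:
  assumes t: "t \<in> Xtil X" and a: "a \<in> admissible_letters t"
  shows "prepend a t \<in> Xtil X"
proof (rule Xtil_memI)
  show "prepend a t \<in> extensional Idx" by (simp add: prepend_def)
  fix k l :: nat assume kl: "k \<le> l"
  have "k - 1 \<le> Suc l" using kl by simp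
  then obtain z where z: "z \<in> t (k - 1, Suc l)" using Xtil_component_nonempty[OF t] by blast
  have "conc [a] z \<in> X" by (rule prepend_component(2)[OF t a kl z])
  moreover have "prepend a t (k', l') = kcls X k' l' (conc [a] z)"
    if "k' \<le> k" "l' - k' \<le> l - k" "k' \<le> l'" for k' l'
  proof -
    have "k' - 1 \<le> k - 1" "Suc l' - (k' - 1) \<le> Suc l - (k - 1)" "k' - 1 \<le> Suc l'" "k - 1 \<le> Suc l"
      using that kl by arith+
    then have "z \<in> t (k' - 1, Suc l')" by (rule Xtil_component_mono(2)[OF t _ _ _ _ z])
    then show ?thesis by (rule prepend_component(1)[OF t a that(3)])
  qed
  ultimately show "\<exists>z\<in>X. \<forall>k' l'. k' \<le> k \<longrightarrow> l' - k' \<le> l - k \<longrightarrow> k' \<le> l' \<longrightarrow>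
      prepend a t (k', l') = kcls X k' l' z"
    by blast
qed

lemma shift_til_prepend:
  assumes t: "t \<in> Xtil X" and a: "a \<in> admissible_letters t"
  shows "shift_til X (prepend a t) = t"
proof (rule Xtil_eqI[OF shift_til_mem[OF prepend_mem[OF t a]] t])
  fix k l :: nat assume kl: "k \<le> l"
  obtain z where z: "z \<in> t (Suc k - 1, Suc (Suc l))"
    using Xtil_component_nonempty[OF t, of "Suc k - 1" "Suc (Suc l)"] kl by auto
  have "conc [a] z \<in> prepend a t (Suc k, Suc l)"
    using prepend_component[OF t a _ z] kl kcls_self by simp
  then have "shift_til X (prepend a t) (k, l) = kcls X k l z"
    using shift_til_component[OF prepend_mem[OF t a] kl] by simp
  moreover have "t (k, l) = kcls X k l z" using Xtil_component_mono(1)[OF t _ _ _ _ z] kl by simp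
  ultimately show "shift_til X (prepend a t) (k, l) = t (k, l)" by simp
qed

lemma first_letter_prepend:
  assumes t: "t \<in> Xtil X" and a: "a \<in> admissible_letters t"
  shows "first_letter (prepend a t) = a"
proof -
  obtain z where z: "z \<in> t (1 - 1, Suc 1)" using Xtil_component_nonempty[OF t, of 0 "Suc 1"] by auto
  then have "conc [a] z \<in> prepend a t (Suc 0, 1)"
    using prepend_component[OF t a _ z] kcls_self by simp
  from first_letter_eq[OF prepend_mem[OF t a] _ this] show ?thesis by simp
qed

lemma shift_til_image_first_letter:
  "shift_til X ` {s \<in> Xtil X. first_letter s = a} = {t \<in> Xtil X. a \<in> admissible_letters t}"
proof
  show "shift_til X ` {s \<in> Xtil X. first_letter s = a} \<subseteq> {t \<in> Xtil X. a \<in> admissible_letters t}"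
  proof (rule image_subsetI)
    fix s assume "s \<in> {s \<in> Xtil X. first_letter s = a}"
    then have s: "s \<in> Xtil X" and "first_letter s = a" by auto
    then show "shift_til X s \<in> {t \<in> Xtil X. a \<in> admissible_letters t}"
      using first_letter_admissible[OF s] shift_til_mem[OF s] by simp
  qed
  show "{t \<in> Xtil X. a \<in> admissible_letters t} \<subseteq> shift_til X ` {s \<in> Xtil X. first_letter s = a}"
  proof
    fix t assume "t \<in> {t \<in> Xtil X. a \<in> admissible_letters t}"
    then have t: "t \<in> Xtil X" and a: "a \<in> admissible_letters t" by auto
    have "prepend a t \<in> {s \<in> Xtil X. first_letter s = a}"
      using prepend_mem[OF t a] first_letter_prepend[OF t a] by simp
    then show "t \<in> shift_til X ` {s \<in> Xtil X. first_letter s = a}"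
      by (rule image_eqI[where f = "shift_til X", OF shift_til_prepend[OF t a, symmetric]])
  qed
qed

lemma shift_til_image: "shift_til X ` Xtil X = Xtil X"
proof
  show "shift_til X ` Xtil X \<subseteq> Xtil X" using shift_til_mem by blast
  show "Xtil X \<subseteq> shift_til X ` Xtil X"
  proof
    fix t assume t: "t \<in> Xtil X"
    then obtain a where "a \<in> admissible_letters t" using admissible_letters_nonempty by blast
    with t have "t \<in> shift_til X ` {s \<in> Xtil X. first_letter s = a}"
      by (simp only: shift_til_image_first_letter mem_Collect_eq simp_thms)
    then show "t \<in> shift_til X ` Xtil X" by auto
  qed
qed

section \<open>Aperiodicity\<close>

definition base_point :: "'a thread \<Rightarrow> nat \<Rightarrow> 'a" where
  "base_point t = (\<lambda>i. (SOME z. z \<in> t (Suc i, Suc i)) i)"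

lemma base_point_eq:
  assumes t: "t \<in> Xtil X" and "i < k" "k \<le> l" and z: "z \<in> t (k, l)"
  shows "z i = base_point t i"
proof -
  have z_diag: "z \<in> t (Suc i, Suc i)" using Xtil_component_mono(2)[OF t _ _ _ _ z] assms(2,3) by simp
  define z' where "z' = (SOME z. z \<in> t (Suc i, Suc i))"
  have "z' \<in> t (Suc i, Suc i)" unfolding z'_def some_in_eq using z_diag by blast
  then have "kl_rel X (Suc i) (Suc i) z z'"
    using Xtil_component_eq_kcls(2)[OF t _ z_diag] by (simp add: in_kcls)
  then show ?thesis by (simp add: kl_rel_def base_point_def z'_def)
qed

lemma base_point_mem:
  assumes t: "t \<in> Xtil X"
  shows "base_point t \<in> X"
proof (rule closedin_fullshift_mem_if_prefixes[OF closed])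
  fix n
  obtain z where z: "z \<in> t (n, n)" using Xtil_component_nonempty[OF t, of n n] by auto
  then have "z \<in> X" using Xtil_component_eq_kcls(1)[OF t _ z] by simp
  moreover have "\<forall>i<n. z i = base_point t i" using base_point_eq[OF t _ _ z] by simp
  ultimately show "\<exists>x\<in>X. \<forall>i<n. x i = base_point t i" by blast
qed

lemma base_point_shift_til:
  assumes t: "t \<in> Xtil X"
  shows "base_point (shift_til X t) = shift (base_point t)"
proof
  fix i
  obtain z where z: "z \<in> t (Suc (Suc i), Suc (Suc i))"
    using Xtil_component_nonempty[OF t, of "Suc (Suc i)" "Suc (Suc i)"] by auto
  then have shifted: "shift z \<in> shift_til X t (Suc i, Suc i)"
    using shift_til_component[OF t _ z] kcls_self[OF shift_mem] Xtil_component_eq_kcls(1)[OF t _ z] by simp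
  have "shift z i = base_point (shift_til X t) i"
    using base_point_eq[OF shift_til_mem[OF t] _ _ shifted] by simp
  moreover have "z (Suc i) = base_point t (Suc i)" using base_point_eq[OF t _ _ z] by simp
  ultimately show "base_point (shift_til X t) i = shift (base_point t) i" by (simp add: shift_def)
qed

lemma base_point_funpow_shift_til:
  assumes t: "t \<in> Xtil X"
  shows "(shift_til X ^^ n) t \<in> Xtil X \<and> base_point ((shift_til X ^^ n) t) = (shift ^^ n) (base_point t)"
proof (induction n)
  case (Suc n)
  then show ?case using shift_til_mem base_point_shift_til by simp
qed (simp add: t)

lemma aperiodic_on_Xtil:
  assumes "aperiodic_on X shift"
  shows "aperiodic_on (Xtil X) (shift_til X)"
  unfolding aperiodic_on_def
proof (intro ballI allI impI notI)
  fix t n assume t: "t \<in> Xtil X" and "(1::nat) \<le> n" and "(shift_til X ^^ n) t = t"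
  then have "(shift ^^ n) (base_point t) = base_point t"
    using base_point_funpow_shift_til[OF t, of n] by simp
  then show False using assms base_point_mem[OF t] \<open>1 \<le> n\<close> unfolding aperiodic_on_def by blast
qed

section \<open>The branch points of the cover\<close>

lemma Sp_l_imp_two_admissible_letters:
  assumes "t \<in> Sp_l (Xtil X) (shift_til X)"
  obtains a b where "a \<noteq> b" "a \<in> admissible_letters t" "b \<in> admissible_letters t"
proof -
  obtain s1 s2 where s: "s1 \<in> Xtil X" "s2 \<in> Xtil X" "s1 \<noteq> s2"
    "shift_til X s1 = t" "shift_til X s2 = t"
    using assms unfolding Sp_l_def by blast
  have "first_letter s1 \<noteq> first_letter s2"
  proof
    assume "first_letter s1 = first_letter s2"
    then have "s1 = s2" using shift_til_preimage_eqI[OF s(1,2)] s(4,5) by simp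
    then show False using s(3) by simp
  qed
  moreover have "first_letter s1 \<in> admissible_letters t" "first_letter s2 \<in> admissible_letters t"
    using first_letter_admissible[OF s(1)] first_letter_admissible[OF s(2)] s(4,5) by simp_all
  ultimately show ?thesis by (rule that)
qed

lemma component_in_Sp_l_if_two_admissible_letters:
  assumes t: "t \<in> Xtil X" and ab: "a \<noteq> b" "a \<in> admissible_letters t" "b \<in> admissible_letters t"
    and z: "z \<in> t (k, Suc k)"
  shows "z \<in> Sp_l X shift"
proof -
  have "conc [a] z \<in> X" "conc [b] z \<in> X"
    using ext_letters_iff[OF t z] ab(2,3) unfolding admissible_letters_def by blast+
  moreover have "conc [a] z \<noteq> conc [b] z"
  proof
    assume "conc [a] z = conc [b] z"
    then have "conc [a] z 0 = conc [b] z 0" by simp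
    then show False using ab(1) by simp
  qed
  moreover have "z \<in> X" using Xtil_component_eq_kcls(1)[OF t _ z] by simp
  ultimately show ?thesis
    unfolding Sp_l_def using shift_conc_singleton[of a z] shift_conc_singleton[of b z] by blast
qed

lemma singleton_component_if_two_admissible_letters:
  assumes fin: "finite (Sp_l X shift)"
    and t: "t \<in> Xtil X" and ab: "a \<noteq> b" "a \<in> admissible_letters t" "b \<in> admissible_letters t"
  obtains N x where "t (N, Suc N) = {x}" "x \<in> Sp_l X shift"
proof -
  obtain N where N: "\<And>x y. x \<in> Sp_l X shift \<Longrightarrow> y \<in> Sp_l X shift \<Longrightarrow> (\<forall>i<N. x i = y i) \<Longrightarrow> x = y"
    using finite_set_separated_by_prefix[OF fin] by blast
  obtain x where x: "x \<in> t (N, Suc N)" using Xtil_component_nonempty[OF t, of N "Suc N"] by auto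
  have "y = x" if y: "y \<in> t (N, Suc N)" for y
  proof -
    have "kl_rel X N (Suc N) x y" using y Xtil_component_eq_kcls(2)[OF t _ x] by (simp add: in_kcls)
    then have "\<forall>i<N. y i = x i" by (simp add: kl_rel_def)
    moreover have "y \<in> Sp_l X shift" "x \<in> Sp_l X shift"
      using component_in_Sp_l_if_two_admissible_letters[OF t ab] x y by blast+
    ultimately show "y = x" using N by blast
  qed
  then have "t (N, Suc N) = {x}" using x by blast
  moreover have "x \<in> Sp_l X shift" using component_in_Sp_l_if_two_admissible_letters[OF t ab x] .
  ultimately show ?thesis by (rule that)
qed

lemma Sp_l_Xtil_singleton_component:
  assumes fin: "finite (Sp_l X shift)" and Sp: "t \<in> Sp_l (Xtil X) (shift_til X)"
  obtains N x where "t (N, Suc N) = {x}" "x \<in> Sp_l X shift"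
proof -
  have t: "t \<in> Xtil X" using Sp by (simp add: Sp_l_def)
  obtain a b where "a \<noteq> b" "a \<in> admissible_letters t" "b \<in> admissible_letters t"
    using Sp_l_imp_two_admissible_letters[OF Sp] .
  from singleton_component_if_two_admissible_letters[OF fin t this] that show ?thesis .
qed

lemma embed_mem_Sp_l:
  assumes "x \<in> Sp_l X shift"
  shows "embed x \<in> Sp_l (Xtil X) (shift_til X)"
proof -
  obtain u v where uv: "x \<in> X" "u \<in> X" "v \<in> X" "u \<noteq> v" "shift u = x" "shift v = x"
    using assms unfolding Sp_l_def by blast
  then have "embed u \<noteq> embed v" using inj_onD[OF inj_on_embed] by blast
  moreover have "shift_til X (embed u) = embed x" "shift_til X (embed v) = embed x"
    using shift_til_embed[OF uv(2)] shift_til_embed[OF uv(3)] uv(5,6) by simp_all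
  moreover have "embed x \<in> Xtil X" "embed u \<in> Xtil X" "embed v \<in> Xtil X"
    using embed_mem uv(1-3) by simp_all
  ultimately show ?thesis unfolding Sp_l_def by blast
qed

lemma Sp_l_Xtil_eq:
  assumes fin: "finite (Sp_l X shift)"
  shows "Sp_l (Xtil X) (shift_til X) = embed ` Sp_l X shift"
proof
  show "embed ` Sp_l X shift \<subseteq> Sp_l (Xtil X) (shift_til X)" using embed_mem_Sp_l by blast
  show "Sp_l (Xtil X) (shift_til X) \<subseteq> embed ` Sp_l X shift"
  proof
    fix t assume Sp: "t \<in> Sp_l (Xtil X) (shift_til X)"
    then have t: "t \<in> Xtil X" by (simp add: Sp_l_def)
    obtain N x where "t (N, Suc N) = {x}" "x \<in> Sp_l X shift"
      using Sp_l_Xtil_singleton_component[OF fin Sp] .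
    then show "t \<in> embed ` Sp_l X shift" using Xtil_eq_embed_if_singleton[OF t] by blast
  qed
qed

lemma card_Sp_l_Xtil:
  assumes fin: "finite (Sp_l X shift)"
  shows "finite (Sp_l (Xtil X) (shift_til X)) \<and> card (Sp_l (Xtil X) (shift_til X)) = card (Sp_l X shift)"
proof -
  have "inj_on embed (Sp_l X shift)"
    using inj_on_embed by (rule inj_on_subset) (auto simp: Sp_l_def)
  then show ?thesis using Sp_l_Xtil_eq[OF fin] fin by (simp add: card_image)
qed

section \<open>Topology of the cover\<close>

lemma topspace_Xtil_top: "topspace (Xtil_top X) = Xtil X"
  unfolding Xtil_top_def cover_prod_top_def using Xtil_PiE by auto

lemma continuous_map_component:
  assumes "k \<le> l"
  shows "continuous_map (cover_prod_top X) (discrete_topology (kXl X k l)) (\<lambda>t. t (k, l))"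
  unfolding cover_prod_top_def
  using continuous_map_product_projection[of "(k, l)" Idx "\<lambda>p. discrete_topology (kXl X (fst p) (snd p))"] assms
  by simp

lemma closedin_Xtil: "closedin (cover_prod_top X) (Xtil X)"
proof -
  let ?T = "cover_prod_top X"
  define J where "J = {(p, q). p \<in> Idx \<and> q \<in> Idx \<and> idx_le p q}"
  define E where "E = (\<lambda>(p, q). {t \<in> topspace ?T. t p = bond X p (t q)})"
  have top: "topspace ?T = (\<Pi>\<^sub>E p\<in>Idx. kXl X (fst p) (snd p))"
    by (simp add: cover_prod_top_def)
  have J_ne: "((0, 0), (0, 0)) \<in> J" by (simp add: J_def)
  have Xtil_eq: "Xtil X = (\<Inter>j\<in>J. E j)"
  proof (intro equalityI subsetI)
    fix t assume "t \<in> Xtil X"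
    then show "t \<in> (\<Inter>j\<in>J. E j)" by (auto simp: Xtil_def top E_def J_def)
  next
    fix t assume t: "t \<in> (\<Inter>j\<in>J. E j)"
    have "t p = bond X p (t q)" if "p \<in> Idx" "q \<in> Idx" "idx_le p q" for p q
    proof -
      have "(p, q) \<in> J" using that by (simp add: J_def)
      with t show ?thesis by (force simp: E_def)
    qed
    moreover have "t \<in> topspace ?T" using t J_ne by (force simp: E_def)
    ultimately show "t \<in> Xtil X" unfolding Xtil_def top by blast
  qed
  have closed_E: "closedin ?T (E j)" if "j \<in> J" for j
  proof -
    obtain k l k' l' where j: "j = ((k, l), (k', l'))" by (metis prod.collapse)
    then have h: "k \<le> k'" "l - k \<le> l' - k'" "k \<le> l" "k' \<le> l'"
      using that by (auto simp: J_def)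
    have "bond X (k, l) \<in> kXl X k' l' \<rightarrow> kXl X k l"
      using h bond_kcls by (auto simp: kXl_def)
    then have "continuous_map (discrete_topology (kXl X k' l')) (discrete_topology (kXl X k l)) (bond X (k, l))"
      by simp
    then have "continuous_map ?T (discrete_topology (kXl X k l)) (bond X (k, l) \<circ> (\<lambda>t. t (k', l')))"
      by (rule continuous_map_compose[OF continuous_map_component[OF h(4)]])
    then have "continuous_map ?T (discrete_topology (kXl X k l)) (\<lambda>t. bond X (k, l) (t (k', l')))"
      by (simp only: o_def)
    then show ?thesis
      using closedin_continuous_maps_eq[OF Hausdorff_space_discrete_topology continuous_map_component[OF h(3)]] j
      by (simp add: E_def)
  qed
  show ?thesis
    unfolding Xtil_eq using J_ne closed_E by (intro closedin_Inter) auto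
qed

lemma compact_space_Xtil_top: "compact_space (Xtil_top X)"
proof -
  have "compact_space (cover_prod_top X)"
    unfolding cover_prod_top_def compact_space_product_topology
    by (simp add: compact_space_discrete_topology finite_kXl)
  then show ?thesis
    unfolding Xtil_top_def using closedin_compact_space[OF _ closedin_Xtil] compact_space_subtopology by blast
qed

lemma metrizable_space_Xtil_top: "metrizable_space (Xtil_top X)"
proof -
  have "metrizable_space (cover_prod_top X)"
    unfolding cover_prod_top_def metrizable_space_product_topology
    by (simp add: countable_subset[OF subset_UNIV countableI_type])
  then show ?thesis unfolding Xtil_top_def by (rule metrizable_space_subtopology)
qed

lemma dim_le_0_Xtil_top: "(Xtil_top X) dim_le 0"
  unfolding Xtil_top_def cover_prod_top_def
  by (rule dimension_le_subtopology[OF product_discrete_dim_le_0])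

lemma continuous_map_Xtil_component:
  assumes "k \<le> l"
  shows "continuous_map (Xtil_top X) (discrete_topology (kXl X k l)) (\<lambda>t. t (k, l))"
  unfolding Xtil_top_def by (rule continuous_map_from_subtopology[OF continuous_map_component[OF assms]])

lemma clopen_cylinder:
  assumes "k \<le> l"
  shows "openin (Xtil_top X) {t \<in> Xtil X. P (t (k, l))}"
    and "closedin (Xtil_top X) {t \<in> Xtil X. P (t (k, l))}"
proof -
  have eq: "{t \<in> topspace (Xtil_top X). t (k, l) \<in> {C \<in> kXl X k l. P C}} = {t \<in> Xtil X. P (t (k, l))}"
    using topspace_Xtil_top Xtil_component_in_kXl assms by auto
  show "openin (Xtil_top X) {t \<in> Xtil X. P (t (k, l))}"
    using openin_continuous_map_preimage[OF continuous_map_Xtil_component[OF assms], of "{C \<in> kXl X k l. P C}"]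
    unfolding eq by simp
  show "closedin (Xtil_top X) {t \<in> Xtil X. P (t (k, l))}"
    using closedin_continuous_map_preimage[OF continuous_map_Xtil_component[OF assms], of "{C \<in> kXl X k l. P C}"]
    unfolding eq by simp
qed

lemma continuous_map_shift_til: "continuous_map (Xtil_top X) (Xtil_top X) (shift_til X)"
proof -
  have component: "continuous_map (Xtil_top X) (discrete_topology (kXl X k l)) (\<lambda>t. shift_til X t (k, l))"
    if kl: "k \<le> l" for k l
  proof -
    define g where "g = (\<lambda>C. kcls X k l (shift (SOME z. z \<in> C)))"
    have "g \<in> kXl X (Suc k) (Suc l) \<rightarrow> kXl X k l"
    proof
      fix C assume "C \<in> kXl X (Suc k) (Suc l)"
      then obtain x where x: "x \<in> X" "C = kcls X (Suc k) (Suc l) x" by (auto simp: kXl_def)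
      then have "(SOME z. z \<in> C) \<in> C" unfolding some_in_eq using kcls_self by blast
      then have "(SOME z. z \<in> C) \<in> X" using x by (simp add: in_kcls)
      then show "g C \<in> kXl X k l" unfolding g_def kXl_def using shift_mem by blast
    qed
    then have g: "continuous_map (discrete_topology (kXl X (Suc k) (Suc l))) (discrete_topology (kXl X k l)) g"
      by simp
    have "Suc k \<le> Suc l" using kl by simp
    then have "continuous_map (Xtil_top X) (discrete_topology (kXl X (Suc k) (Suc l))) (\<lambda>t. t (Suc k, Suc l))"
      by (rule continuous_map_Xtil_component)
    then have "continuous_map (Xtil_top X) (discrete_topology (kXl X k l)) (g \<circ> (\<lambda>t. t (Suc k, Suc l)))"
      using g by (rule continuous_map_compose)
    then show ?thesis
      by (rule continuous_map_eq) (use kl in \<open>simp add: g_def shift_til_def\<close>)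
  qed
  have "continuous_map (Xtil_top X) (cover_prod_top X) (shift_til X)"
    unfolding cover_prod_top_def continuous_map_componentwise
    using component by (auto simp: shift_til_def Idx_def)
  then show ?thesis
    unfolding Xtil_top_def[of X]
    using topspace_Xtil_top shift_til_mem
    by (auto simp: continuous_map_in_subtopology Xtil_top_def)
qed

lemma openin_singleton_if_singleton_component:
  assumes t: "t \<in> Xtil X" and single: "t (N, Suc N) = {x}"
  shows "openin (Xtil_top X) {t}"
proof -
  have "{s \<in> Xtil X. s (N, Suc N) = {x}} = {t}"
  proof (intro equalityI subsetI)
    fix s assume "s \<in> {s \<in> Xtil X. s (N, Suc N) = {x}}"
    then have "s \<in> Xtil X" "s (N, Suc N) = {x}" by simp_all
    then have "s = embed x" by (rule Xtil_eq_embed_if_singleton)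
    then show "s \<in> {t}" using Xtil_eq_embed_if_singleton[OF t single] by simp
  qed (use t single in simp)
  then show ?thesis using clopen_cylinder(1)[of N "Suc N" "\<lambda>C. C = {x}"] by simp
qed

text \<open>If \<open>a\<close> is the only admissible letter of \<open>t\<close>, it is already the only letter in some
  \<open>ext_letters t K\<close>, and this set depends only on \<open>t(K,K+1)\<close>; with two admissible
  letters \<open>t\<close> is isolated.\<close>

lemma openin_admissible_letter:
  assumes fin: "finite (Sp_l X shift)"
  shows "openin (Xtil_top X) {t \<in> Xtil X. a \<in> admissible_letters t}"
proof (subst openin_subopen, intro ballI)
  fix t assume "t \<in> {t \<in> Xtil X. a \<in> admissible_letters t}"
  then have t: "t \<in> Xtil X" and a: "a \<in> admissible_letters t" by auto
  show "\<exists>T. openin (Xtil_top X) T \<and> t \<in> T \<and> T \<subseteq> {t \<in> Xtil X. a \<in> admissible_letters t}"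
  proof (cases "admissible_letters t = {a}")
    case False
    then obtain b where b: "b \<in> admissible_letters t" "b \<noteq> a"
      using a by (auto simp: set_eq_iff)
    obtain N x where "t (N, Suc N) = {x}"
      using singleton_component_if_two_admissible_letters[OF fin t b(2)[symmetric] a b(1)] by blast
    then have "openin (Xtil_top X) {t}" by (rule openin_singleton_if_singleton_component[OF t])
    moreover have "{t} \<subseteq> {t \<in> Xtil X. a \<in> admissible_letters t}" using t a by simp
    ultimately have "openin (Xtil_top X) {t} \<and> t \<in> {t} \<and> {t} \<subseteq> {t \<in> Xtil X. a \<in> admissible_letters t}"
      by simp
    then show ?thesis by (rule exI)
  next
    case True
    obtain K where "admissible_letters t = ext_letters t K" by (rule admissible_letters_attained[OF t])
    then have K: "ext_letters t K = {a}" using True by simp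
    define T where "T = {s \<in> Xtil X. s (K, Suc K) = t (K, Suc K)}"
    have "T \<subseteq> {t \<in> Xtil X. a \<in> admissible_letters t}"
    proof
      fix s assume "s \<in> T"
      then have s: "s \<in> Xtil X" "ext_letters s K = {a}" using K by (auto simp: T_def ext_letters_def)
      then have "admissible_letters s \<subseteq> {a}" unfolding admissible_letters_def by blast
      then show "s \<in> {t \<in> Xtil X. a \<in> admissible_letters t}"
        using admissible_letters_nonempty[OF s(1)] s(1) by blast
    qed
    moreover have "openin (Xtil_top X) T" unfolding T_def by (rule clopen_cylinder) simp
    moreover have "t \<in> T" using t by (simp add: T_def)
    ultimately have "openin (Xtil_top X) T \<and> t \<in> T \<and> T \<subseteq> {t \<in> Xtil X. a \<in> admissible_letters t}"
      by simp
    then show ?thesis by (rule exI)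
  qed
qed

lemma local_homeomorphism_shift_til:
  assumes fin: "finite (Sp_l X shift)"
  shows "local_homeomorphism (Xtil_top X) (shift_til X)"
proof (rule local_homeomorphism_compactI[OF compact_space_Xtil_top
      metrizable_imp_Hausdorff_space[OF metrizable_space_Xtil_top] continuous_map_shift_til])
  fix s assume "s \<in> topspace (Xtil_top X)"
  then have s: "s \<in> Xtil X" by (simp add: topspace_Xtil_top)
  define U where "U = {s' \<in> Xtil X. first_letter s' = first_letter s}"
  have cylinder: "U = {s' \<in> Xtil X. (\<lambda>C. (SOME w. w \<in> C) 0 = first_letter s) (s' (1, 1))}"
    unfolding U_def first_letter_def by simp
  have "s \<in> U" using s by (simp add: U_def)
  moreover have "inj_on (shift_til X) U"
    by (rule inj_onI) (use shift_til_preimage_eqI in \<open>auto simp: U_def\<close>)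
  moreover have "openin (Xtil_top X) (shift_til X ` U)"
    unfolding U_def shift_til_image_first_letter by (rule openin_admissible_letter[OF fin])
  moreover have "openin (Xtil_top X) U" unfolding cylinder by (rule clopen_cylinder) simp
  moreover have "closedin (Xtil_top X) U" unfolding cylinder by (rule clopen_cylinder) simp
  ultimately show "\<exists>U. openin (Xtil_top X) U \<and> closedin (Xtil_top X) U \<and> s \<in> U \<and>
      inj_on (shift_til X) U \<and> openin (Xtil_top X) (shift_til X ` U)"
    by blast
qed

lemma isolated_point_Sp_l_Xtil:
  assumes fin: "finite (Sp_l X shift)" and t: "t \<in> Sp_l (Xtil X) (shift_til X)"
  shows "isolated_point (Xtil_top X) t"
proof -
  have "t \<in> Xtil X" using t by (simp add: Sp_l_def)
  moreover obtain N x where "t (N, Suc N) = {x}"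
    using Sp_l_Xtil_singleton_component[OF fin t] by blast
  ultimately have "openin (Xtil_top X) {t}" by (rule openin_singleton_if_singleton_component)
  then show ?thesis unfolding isolated_point_def using \<open>t \<in> Xtil X\<close> by (simp add: topspace_Xtil_top)
qed

end

theorem theorem3p5:
  fixes X :: "(nat \<Rightarrow> 'a::finite) set"
  assumes "subshift X"
    and "shift ` X = X"
    and "aperiodic_on X shift"
    and "finite (Sp_l X shift)"
  shows "topspace (Xtil_top X) = Xtil X
    \<and> compact_space (Xtil_top X) \<and> metrizable_space (Xtil_top X) \<and> (Xtil_top X) dim_le 0
    \<and> continuous_map (Xtil_top X) (Xtil_top X) (shift_til X)
    \<and> shift_til X ` Xtil X = Xtil X
    \<and> aperiodic_on (Xtil X) (shift_til X)
    \<and> local_homeomorphism (Xtil_top X) (shift_til X)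
    \<and> finite (Sp_l (Xtil X) (shift_til X))
    \<and> card (Sp_l (Xtil X) (shift_til X)) = card (Sp_l X shift)
    \<and> (\<forall>t\<in>Sp_l (Xtil X) (shift_til X). isolated_point (Xtil_top X) t)"
proof -
  interpret onto_subshift X
    using assms(1,2) by unfold_locales (simp_all add: subshift_def)
  show ?thesis
    using card_Sp_l_Xtil[OF assms(4)]
    by (intro conjI ballI topspace_Xtil_top compact_space_Xtil_top metrizable_space_Xtil_top
        dim_le_0_Xtil_top continuous_map_shift_til shift_til_image aperiodic_on_Xtil[OF assms(3)]
        local_homeomorphism_shift_til[OF assms(4)] isolated_point_Sp_l_Xtil[OF assms(4)]) simp_all
qed

end
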